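(* Let $n_0,L\in\mathbb{N}_+$, $n_1,\dots,n_L\in\mathbb{N}_+$, $h_l\in\mathrm{RL}(n_{l-1},n_l)$ for $l=1,\dots,L$, $\mathbf{h}=(h_1,\dots,h_L)$, and $\gamma\in\Gamma$. Then for every $l\in\{2,\dots,L\}$, $$\tilde{\mathcal{H}}^{(l)}(\mathcal{S}^{(l)}_{\mathbf{h}})\preceq\varphi^{(\gamma)}_{n_l}\big(\tilde{\mathcal{H}}^{(l-1)}(\mathcal{S}^{(l-1)}_{\mathbf{h}})\big).$$
   Context: $\sigma(x)=\max(0,x)$; $\mathrm{RL}(n,n')$ ($n,n'\in\mathbb{N}_+$) is the set of maps $h:\mathbb{R}^n\to\mathbb{R}^{n'}$, $h(x)_i=\sigma(\langle x,w_i\rangle+b_i)$ for some $W\in\mathbb{R}^{n'\times n}$ with rows $w_i$, $b\in\mathbb{R}^{n'}$; convention: $\mathrm{RL}(0,n')$ are constant maps $\{0\}\to\mathbb{R}^{n'}$ with $\mathcal{H}_{n'}(\mathcal{S}_h)={\rm e}_0$. Signature $S_h(x)_i=1$ iff $\langle x,w_i\rangle+b_i>0$ else $0$; $\mathcal{S}_h=\{S_h(x)\}$; $|s|=\sum_i s_i$. Multi signature $S_{\mathbf{h}}(x)=(S_{h_1}(x),S_{h_2}(h_1(x)),\dots,S_{h_L}(h_{L-1}\circ\cdots\circ h_1(x)))$, $\mathcal{S}_{\mathbf{h}}=\{S_{\mathbf{h}}(x):x\in\mathbb{R}^{n_0}\}$, and $\mathcal{S}^{(l)}_{\mathbf{h}}=\{(s_1,\dots,s_l):(s_1,\dots,s_L)\in\mathcal{S}_{\mathbf{h}}\}$.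 $V$: sequences $(v_j)_{j\in\mathbb{N}}$ of nonnegative integers with finite sum; ${\rm e}_i$ has $({\rm e}_i)_j=\delta_{ij}$; $v\preceq w$ iff $\sum_{j\ge J}v_j\le\sum_{j\ge J}w_j$ for all $J$; $\max_i(v^{(i)})_J=\max_i\sum_{j\ge J}v^{(i)}_j-\max_i\sum_{j\ge J+1}v^{(i)}_j$ for finite families. $\mathcal{H}_{n'}(\mathcal{S})=(|\{s\in\mathcal{S}:|s|=j\}|)_j$. $\tilde{\mathcal{H}}^{(l)}(U)=(|\{(s_1,\dots,s_l)\in U:\min(n_0,|s_1|,\dots,|s_l|)=j\}|)_{j\in\mathbb{N}}$ for $U\subseteq\{0,1\}^{n_1}\times\dots\times\{0,1\}^{n_l}$. $\Gamma$: families $(\gamma_{n,n'})_{n'\in\mathbb{N}_+,n\in\{0,\dots,n'\}}$ in $V$ with (i) $\max\{\mathcal{H}_{n'}(\mathcal{S}_h):h\in\mathrm{RL}(n,n')\}\preceq\gamma_{n,n'}$, (ii) $n\le\tilde n\le n'\Rightarrow\gamma_{n,n'}\preceq\gamma_{\tilde n,n'}$. $\mathrm{cl}_{i^*}(v)_i=v_i$ ($i<i^*$), $\sum_{j\ge i^*}v_j$ ($i=i^*$), $0$ ($i>i^*$). $\varphi^{(\gamma)}_{n'}(v)=\sum_{n=0}^\infty v_n\,\mathrm{cl}_{\min(n,n')}(\gamma_{\min(n,n'),n'})$. *)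

theory Defs
  imports Complex_Main
begin

(* Elements of V: nat \<Rightarrow> nat with finite support *)
definition finsupp :: "(nat \<Rightarrow> nat) \<Rightarrow> bool" where
  "finsupp v \<longleftrightarrow> finite {j. v j \<noteq> 0}"

definition tail :: "(nat \<Rightarrow> nat) \<Rightarrow> nat \<Rightarrow> nat" where
  "tail v J = (\<Sum>j | J \<le> j \<and> v j \<noteq> 0. v j)"

definition precV :: "(nat \<Rightarrow> nat) \<Rightarrow> (nat \<Rightarrow> nat) \<Rightarrow> bool" where
  "precV v w \<longleftrightarrow> (\<forall>J. tail v J \<le> tail w J)"

definition unitV :: "nat \<Rightarrow> nat \<Rightarrow> nat" where
  "unitV i = (\<lambda>j. if j = i then 1 else 0)"

(* max of a finite family of elements of V *)
definition maxV :: "(nat \<Rightarrow> nat) set \<Rightarrow> nat \<Rightarrow> nat" where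
  "maxV F = (\<lambda>J. Max ((\<lambda>v. tail v J) ` F) - Max ((\<lambda>v. tail v (Suc J)) ` F))"

(* vectors in R^n are functions nat \<Rightarrow> real vanishing from index n on;
   a ReLU layer in RL(n,n') is given by weights Wl i j (i<n', j<n) and biases bl i *)
definition preact :: "(nat \<Rightarrow> nat \<Rightarrow> real) \<Rightarrow> (nat \<Rightarrow> real) \<Rightarrow> nat \<Rightarrow> (nat \<Rightarrow> real) \<Rightarrow> nat \<Rightarrow> real" where
  "preact Wl bl n x i = (\<Sum>j<n. Wl i j * x j) + bl i"

definition layer :: "(nat \<Rightarrow> nat \<Rightarrow> real) \<Rightarrow> (nat \<Rightarrow> real) \<Rightarrow> nat \<Rightarrow> nat \<Rightarrow> (nat \<Rightarrow> real) \<Rightarrow> nat \<Rightarrow> real" where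
  "layer Wl bl n n' x = (\<lambda>i. if i < n' then max 0 (preact Wl bl n x i) else 0)"

(* signature, as the set of indices i<n' with entry 1; |s| = card s *)
definition sigl :: "(nat \<Rightarrow> nat \<Rightarrow> real) \<Rightarrow> (nat \<Rightarrow> real) \<Rightarrow> nat \<Rightarrow> nat \<Rightarrow> (nat \<Rightarrow> real) \<Rightarrow> nat set" where
  "sigl Wl bl n n' x = {i. i < n' \<and> preact Wl bl n x i > 0}"

definition sigset :: "nat \<Rightarrow> nat \<Rightarrow> (nat \<Rightarrow> nat \<Rightarrow> real) \<Rightarrow> (nat \<Rightarrow> real) \<Rightarrow> nat set set" where
  "sigset n n' Wl bl = {sigl Wl bl n n' x | x. \<forall>j\<ge>n. x j = 0}"

definition Hcount :: "nat \<Rightarrow> nat set set \<Rightarrow> nat \<Rightarrow> nat" where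
  "Hcount n' S = (\<lambda>j. card {s \<in> S. card s = j})"

(* { H_{n'}(S_h) : h \<in> RL(n,n') }, with the convention for n = 0 *)
definition HRL :: "nat \<Rightarrow> nat \<Rightarrow> (nat \<Rightarrow> nat) set" where
  "HRL n n' = (if n = 0 then {unitV 0}
               else {Hcount n' (sigset n n' Wl bl) | Wl bl. True})"

(* the class \<Gamma>;  \<gamma> n n' = \<gamma>_{n,n'} *)
definition Gamma :: "(nat \<Rightarrow> nat \<Rightarrow> nat \<Rightarrow> nat) \<Rightarrow> bool" where
  "Gamma \<gamma> \<longleftrightarrow>
     (\<forall>n' n. 1 \<le> n' \<and> n \<le> n' \<longrightarrow> finsupp (\<gamma> n n') \<and> precV (maxV (HRL n n')) (\<gamma> n n')) \<and>
     (\<forall>n m n'. 1 \<le> n' \<and> n \<le> m \<and> m \<le> n' \<longrightarrow> precV (\<gamma> n n') (\<gamma> m n'))"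

definition cl :: "nat \<Rightarrow> (nat \<Rightarrow> nat) \<Rightarrow> nat \<Rightarrow> nat" where
  "cl i v = (\<lambda>k. if k < i then v k else if k = i then tail v i else 0)"

definition phi :: "(nat \<Rightarrow> nat \<Rightarrow> nat \<Rightarrow> nat) \<Rightarrow> nat \<Rightarrow> (nat \<Rightarrow> nat) \<Rightarrow> nat \<Rightarrow> nat" where
  "phi \<gamma> n' v = (\<lambda>k. \<Sum>n | v n \<noteq> 0. v n * cl (min n n') (\<gamma> (min n n') n') k)"

(* network: widths d 0, ..., d L; layer l has weights W l and biases B l *)
primrec netout :: "(nat \<Rightarrow> nat) \<Rightarrow> (nat \<Rightarrow> nat \<Rightarrow> nat \<Rightarrow> real) \<Rightarrow> (nat \<Rightarrow> nat \<Rightarrow> real) \<Rightarrow> nat \<Rightarrow> (nat \<Rightarrow> real) \<Rightarrow> nat \<Rightarrow> real" where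
  "netout d W B 0 x = x"
| "netout d W B (Suc l) x = layer (W (Suc l)) (B (Suc l)) (d l) (d (Suc l)) (netout d W B l x)"

(* (s_1,...,s_l), the first l components of the multi signature, as a list *)
definition msig :: "(nat \<Rightarrow> nat) \<Rightarrow> (nat \<Rightarrow> nat \<Rightarrow> nat \<Rightarrow> real) \<Rightarrow> (nat \<Rightarrow> nat \<Rightarrow> real) \<Rightarrow> nat \<Rightarrow> (nat \<Rightarrow> real) \<Rightarrow> nat set list" where
  "msig d W B l x = map (\<lambda>k. sigl (W k) (B k) (d (k - 1)) (d k) (netout d W B (k - 1) x)) [1..<Suc l]"

definition Sl :: "(nat \<Rightarrow> nat) \<Rightarrow> (nat \<Rightarrow> nat \<Rightarrow> nat \<Rightarrow> real) \<Rightarrow> (nat \<Rightarrow> nat \<Rightarrow> real) \<Rightarrow> nat \<Rightarrow> nat set list set" where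
  "Sl d W B l = {msig d W B l x | x. \<forall>j\<ge>d 0. x j = 0}"

definition Htil :: "nat \<Rightarrow> nat set list set \<Rightarrow> nat \<Rightarrow> nat" where
  "Htil n0 U = (\<lambda>j. card {t \<in> U. Min (insert n0 (card ` set t)) = j})"

end

theory Submission
  imports Defs
begin

(* Fix a prefix t = (s_1, ..., s_{l-1}) of multi signatures and the region of inputs realising
   it.  On that region every layer is a fixed affine map followed by the projection onto its
   active coordinates, so by induction the output of layer l-1 ranges over an affine image of a
   space of dimension at most min(n_0, |s_1|, ..., |s_{l-1}|), the bottleneck of t.  The last
   layer restricted to the region therefore acts like a single layer in RL(k, n_l) with
   k = min(bottleneck, n_l): its signatures s with min(|s|, bottleneck) >= J number at most the
   J-th tail of gamma_{k,n_l} when J <= k, and there are none when J > k, which is what the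
   truncation cl encodes.  Summing over t gives the tail inequalities defining the order. *)

definition histogram :: "'a set \<Rightarrow> ('a \<Rightarrow> nat) \<Rightarrow> nat \<Rightarrow> nat" where
  "histogram U g = (\<lambda>j. card {t \<in> U. g t = j})"

definition bottleneck :: "nat \<Rightarrow> nat set list \<Rightarrow> nat" where
  "bottleneck n0 t = Min (insert n0 (card ` set t))"

lemma Htil_eq_histogram: "Htil n0 U = histogram U (bottleneck n0)"
  by (simp add: Htil_def histogram_def bottleneck_def)

lemma Hcount_eq_histogram: "Hcount n' S = histogram S card"
  by (simp add: Hcount_def histogram_def)

lemma bottleneck_Nil [simp]: "bottleneck n0 [] = n0"
  by (simp add: bottleneck_def)

lemma bottleneck_snoc: "bottleneck n0 (t @ [s]) = min (card s) (bottleneck n0 t)"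
proof -
  have "insert n0 (card ` set (t @ [s])) = insert (card s) (insert n0 (card ` set t))"
    by auto
  then show ?thesis by (simp add: bottleneck_def Min_insert)
qed

lemma finsupp_imp_eventually_zero:
  assumes "finsupp v" obtains N where "\<forall>j\<ge>N. v j = 0"
proof -
  obtain N where "\<forall>j\<in>{j. v j \<noteq> 0}. j < N"
    using assms by (auto simp: finsupp_def finite_nat_set_iff_bounded)
  then show ?thesis by (intro that[of N]) force
qed

lemma tail_eq_sum:
  assumes "\<forall>j\<ge>N. v j = 0" shows "tail v J = sum v {J..<N}"
proof -
  have "tail v J = sum v {j. J \<le> j \<and> v j \<noteq> 0}" by (simp add: tail_def)
  also have "\<dots> = sum v {J..<N}"
    by (rule sum.mono_neutral_left) (use assms in \<open>auto simp: not_less[symmetric]\<close>)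
  finally show ?thesis .
qed

lemma tail_Suc:
  assumes "\<forall>j\<ge>N. v j = 0" shows "tail v J = v J + tail v (Suc J)"
proof -
  have "\<forall>j\<ge>max N (Suc J). v j = 0" using assms by auto
  from tail_eq_sum[OF this] show ?thesis by (simp add: sum.atLeast_Suc_lessThan)
qed

lemma tail_split:
  assumes "\<forall>j\<ge>N. v j = 0" and "J \<le> i" shows "tail v J = sum v {J..<i} + tail v i"
proof -
  have "\<forall>j\<ge>max N i. v j = 0" using assms by auto
  from tail_eq_sum[OF this] show ?thesis
    using assms(2) by (simp add: sum.atLeastLessThan_concat)
qed

lemma tail_sum:
  assumes "finite U" and "\<forall>t\<in>U. \<forall>j\<ge>N. f t j = 0"
  shows "tail (\<lambda>k. \<Sum>t\<in>U. f t k) J = (\<Sum>t\<in>U. tail (f t) J)"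
proof -
  have "\<forall>j\<ge>N. (\<Sum>t\<in>U. f t j) = 0" using assms(2) by simp
  then have "tail (\<lambda>k. \<Sum>t\<in>U. f t k) J = (\<Sum>k\<in>{J..<N}. \<Sum>t\<in>U. f t k)"
    by (rule tail_eq_sum)
  also have "\<dots> = (\<Sum>t\<in>U. \<Sum>k\<in>{J..<N}. f t k)"
    by (rule sum.swap)
  also have "\<dots> = (\<Sum>t\<in>U. tail (f t) J)"
    using assms(2) by (intro sum.cong refl) (simp add: tail_eq_sum[of N])
  finally show ?thesis .
qed

lemma tail_histogram:
  assumes "finite U" shows "tail (histogram U g) J = card {t \<in> U. J \<le> g t}"
proof -
  define N where "N = Suc (Max (g ` U))"
  have bound: "g t < N" if "t \<in> U" for t
    using assms that by (simp add: N_def le_imp_less_Suc)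
  then have "\<forall>j\<ge>N. histogram U g j = 0"
    using assms by (fastforce simp: histogram_def)
  then have "tail (histogram U g) J = (\<Sum>j\<in>{J..<N}. histogram U g j)"
    by (rule tail_eq_sum)
  also have "\<dots> = (\<Sum>j\<in>{J..<N}. card {t \<in> U. g t = j})"
    by (simp add: histogram_def)
  also have "\<dots> = card (\<Union>j\<in>{J..<N}. {t \<in> U. g t = j})"
    by (rule card_UN_disjoint[symmetric]) (use assms in auto)
  also have "(\<Union>j\<in>{J..<N}. {t \<in> U. g t = j}) = {t \<in> U. J \<le> g t}"
    using bound by auto
  finally show ?thesis .
qed

lemma tail_cl:
  assumes "\<forall>j\<ge>N. v j = 0"
  shows "tail (cl i v) J = (if J \<le> i then tail v J else 0)"
proof -
  have cl_zero: "\<forall>j\<ge>Suc i. cl i v j = 0" by (simp add: cl_def)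
  show ?thesis
  proof (cases "J \<le> i")
    case True
    have "tail (cl i v) J = sum (cl i v) {J..<i} + cl i v i"
      using True by (simp add: tail_eq_sum[OF cl_zero])
    also have "sum (cl i v) {J..<i} = sum v {J..<i}"
      by (rule sum.cong) (auto simp: cl_def)
    finally show ?thesis
      using True tail_split[OF assms True] by (simp add: cl_def)
  next
    case False
    then show ?thesis by (simp add: tail_eq_sum[OF cl_zero])
  qed
qed

lemma phi_histogram:
  assumes "finite U"
  shows "phi \<gamma> n' (histogram U g) = (\<lambda>k. \<Sum>t\<in>U. cl (min (g t) n') (\<gamma> (min (g t) n') n') k)"
proof
  fix k
  define c where "c y = cl (min y n') (\<gamma> (min y n') n') k" for y
  have support: "{y. histogram U g y \<noteq> 0} = g ` U"
    using assms by (auto simp: histogram_def)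
  have "(\<Sum>t\<in>U. c (g t)) = (\<Sum>y\<in>g ` U. \<Sum>t\<in>{x \<in> U. g x = y}. c (g t))"
    by (rule sum.image_gen[OF assms])
  also have "\<dots> = (\<Sum>y\<in>g ` U. histogram U g y * c y)"
    by (rule sum.cong) (auto simp: histogram_def)
  moreover have "phi \<gamma> n' (histogram U g) k = (\<Sum>y\<in>g ` U. histogram U g y * c y)"
    unfolding phi_def support c_def ..
  ultimately show "phi \<gamma> n' (histogram U g) k = (\<Sum>t\<in>U. c (g t))"
    by simp
qed

lemma tail_phi_histogram:
  assumes "finite U" and "\<forall>i\<le>n'. finsupp (\<gamma> i n')"
  shows "tail (phi \<gamma> n' (histogram U g)) J
       = (\<Sum>t\<in>U. if J \<le> min (g t) n' then tail (\<gamma> (min (g t) n') n') J else 0)"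
proof -
  have "\<forall>t\<in>U. \<forall>j\<ge>Suc n'. cl (min (g t) n') (\<gamma> (min (g t) n') n') j = 0"
    by (simp add: cl_def)
  then have "tail (phi \<gamma> n' (histogram U g)) J
      = (\<Sum>t\<in>U. tail (cl (min (g t) n') (\<gamma> (min (g t) n') n')) J)"
    unfolding phi_histogram[OF assms(1)] by (rule tail_sum[OF assms(1)])
  also have "\<dots> = (\<Sum>t\<in>U. if J \<le> min (g t) n' then tail (\<gamma> (min (g t) n') n') J else 0)"
  proof (rule sum.cong[OF refl])
    fix t
    obtain N where "\<forall>j\<ge>N. \<gamma> (min (g t) n') n' j = 0"
      using assms(2) finsupp_imp_eventually_zero by (meson min.cobounded2)
    then show "tail (cl (min (g t) n') (\<gamma> (min (g t) n') n')) J
        = (if J \<le> min (g t) n' then tail (\<gamma> (min (g t) n') n') J else 0)"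
      by (rule tail_cl)
  qed
  finally show ?thesis .
qed

lemma tail_telescoping:
  fixes M :: "nat \<Rightarrow> nat"
  assumes "\<forall>j\<ge>N. M j = 0" and "\<And>j. M (Suc j) \<le> M j"
  shows "tail (\<lambda>j. M j - M (Suc j)) J = M J"
proof -
  have zero: "\<forall>j\<ge>N. M j - M (Suc j) = 0"
    using assms(1) by simp
  show ?thesis
  proof (cases "J \<le> N")
    case True
    then show ?thesis
    proof (induction J rule: inc_induct)
      case base
      then show ?case using assms(1) by (simp add: tail_eq_sum[OF zero])
    next
      case (step j)
      then show ?case using tail_Suc[OF zero, of j] assms(2)[of j] by simp
    qed
  next
    case False
    then show ?thesis using assms(1) by (simp add: tail_eq_sum[OF zero])
  qed
qed

lemma tail_maxV:
  assumes "F \<noteq> {}" and zero: "\<forall>w\<in>F. \<forall>j\<ge>N. w j = 0"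
    and bounded: "\<forall>w\<in>F. \<forall>j. tail w j \<le> K"
  shows "tail (maxV F) J = Max ((\<lambda>w. tail w J) ` F)"
proof -
  define M where "M j = Max ((\<lambda>w. tail w j) ` F)" for j
  have fin: "finite ((\<lambda>w. tail w j) ` F)" for j
    by (rule finite_subset[of _ "{..K}"]) (use bounded in auto)
  have M_ge: "tail w j \<le> M j" if "w \<in> F" for w j
    unfolding M_def using fin that by simp
  have M_attained: "\<exists>w\<in>F. M j = tail w j" for j
    using Max_in[OF fin] assms(1) by (auto simp: M_def)
  have M_Suc_le: "M (Suc j) \<le> M j" for j
  proof -
    obtain w where "w \<in> F" "M (Suc j) = tail w (Suc j)"
      using M_attained by blast
    moreover have "tail w (Suc j) \<le> tail w j"
      using tail_Suc[of N w j] zero \<open>w \<in> F\<close> by simp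
    ultimately show ?thesis
      using M_ge[of w j] by simp
  qed
  have M_zero: "\<forall>j\<ge>N. M j = 0"
  proof (intro allI impI)
    fix j assume "N \<le> j"
    obtain w where "w \<in> F" "M j = tail w j"
      using M_attained by blast
    then show "M j = 0"
      using zero \<open>N \<le> j\<close> by (simp add: tail_eq_sum[of N])
  qed
  have "maxV F = (\<lambda>j. M j - M (Suc j))"
    by (simp add: maxV_def M_def)
  then show ?thesis
    using tail_telescoping[OF M_zero M_Suc_le] by (simp add: M_def)
qed

lemma tail_le_tail_maxV:
  assumes "v \<in> F" and "\<forall>w\<in>F. \<forall>j\<ge>N. w j = 0" and "\<forall>w\<in>F. \<forall>j. tail w j \<le> K"
  shows "tail v J \<le> tail (maxV F) J"
proof -
  have "finite ((\<lambda>w. tail w J) ` F)"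
    by (rule finite_subset[of _ "{..K}"]) (use assms(3) in auto)
  then have "tail v J \<le> Max ((\<lambda>w. tail w J) ` F)"
    using assms(1) by simp
  also have "\<dots> = tail (maxV F) J"
    using assms by (intro tail_maxV[symmetric]) auto
  finally show ?thesis .
qed

lemma sigl_subset: "sigl Wl bl n n' x \<subseteq> {..<n'}"
  by (auto simp: sigl_def)

lemma sigset_subset_Pow: "sigset n n' Wl bl \<subseteq> Pow {..<n'}"
  by (auto simp: sigset_def sigl_def)

lemma finite_sigset: "finite (sigset n n' Wl bl)"
  by (rule finite_subset[OF sigset_subset_Pow]) simp

lemma card_sigl_le: "card (sigl Wl bl n n' x) \<le> n'"
  using card_mono[OF finite_lessThan sigl_subset] by simp

lemma card_le_of_mem_sigset: "s \<in> sigset n n' Wl bl \<Longrightarrow> card s \<le> n'"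
  by (auto simp: sigset_def card_sigl_le)

lemma card_sigset_0_le_1: "card (sigset 0 n' Wl bl) \<le> 1"
proof -
  have "sigset 0 n' Wl bl \<subseteq> {{i. i < n' \<and> bl i > 0}}"
    by (auto simp: sigset_def sigl_def preact_def)
  then show ?thesis
    using card_mono[of "{{i. i < n' \<and> bl i > 0}}"] by fastforce
qed

lemma tail_Hcount_sigset:
  "tail (Hcount n' (sigset k n' Wl bl)) J = card {s \<in> sigset k n' Wl bl. J \<le> card s}"
  by (simp add: Hcount_eq_histogram tail_histogram finite_sigset)

(* The hypothesis J <= k matters only for k = 0, where the convention HRL 0 n' = {e_0} bounds
   just the count of all signatures, not of those with at least J active neurons. *)
lemma tail_Hcount_le_tail_maxV_HRL:
  assumes "J \<le> k"
  shows "tail (Hcount n' (sigset k n' Wl bl)) J \<le> tail (maxV (HRL k n')) J"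
proof (cases "k = 0")
  case True
  have unit_zero: "\<forall>j\<ge>1. unitV 0 j = 0"
    by (simp add: unitV_def)
  have unit_tail: "tail (unitV 0) j = (if j = 0 then 1 else 0)" for j
    unfolding tail_eq_sum[OF unit_zero] by (cases j) (simp_all add: unitV_def)
  have "tail (Hcount n' (sigset k n' Wl bl)) J \<le> card (sigset 0 n' Wl bl)"
    using True by (simp add: tail_Hcount_sigset card_mono finite_sigset)
  also have "\<dots> \<le> tail (unitV 0) 0"
    using card_sigset_0_le_1 by (simp add: unit_tail)
  also have "\<dots> \<le> tail (maxV {unitV 0}) 0"
    by (rule tail_le_tail_maxV[where N = 1 and K = 1]) (simp_all add: unit_zero unit_tail)
  finally show ?thesis
    using True assms by (simp add: HRL_def)
next
  case False
  have HRL: "HRL k n' = {Hcount n' (sigset k n' Wl bl) | Wl bl. True}"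
    using False by (simp add: HRL_def)
  have zero: "\<forall>j\<ge>Suc n'. Hcount n' (sigset k n' Wl bl) j = 0" for Wl bl
  proof (intro allI impI)
    fix j assume "Suc n' \<le> j"
    then have empty: "{s \<in> sigset k n' Wl bl. card s = j} = {}"
      using card_le_of_mem_sigset by fastforce
    show "Hcount n' (sigset k n' Wl bl) j = 0"
      by (simp add: Hcount_def empty)
  qed
  have bounded: "tail (Hcount n' (sigset k n' Wl bl)) j \<le> 2 ^ n'" for Wl bl j
  proof -
    have "card {s \<in> sigset k n' Wl bl. j \<le> card s} \<le> card (Pow {..<n'})"
      using sigset_subset_Pow[of k n' Wl bl] by (intro card_mono) auto
    then show ?thesis by (simp add: tail_Hcount_sigset card_Pow)
  qed
  show ?thesis
  proof (rule tail_le_tail_maxV[where N = "Suc n'" and K = "2 ^ n'"])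
    show "Hcount n' (sigset k n' Wl bl) \<in> HRL k n'"
      unfolding HRL by blast
    show "\<forall>w\<in>HRL k n'. \<forall>j\<ge>Suc n'. w j = 0"
      unfolding HRL using zero by auto
    show "\<forall>w\<in>HRL k n'. \<forall>j. tail w j \<le> 2 ^ n'"
      unfolding HRL using bounded by auto
  qed
qed

definition factors_affinely :: "(nat \<Rightarrow> real) set \<Rightarrow> nat \<Rightarrow> ((nat \<Rightarrow> real) \<Rightarrow> nat \<Rightarrow> real) \<Rightarrow> bool" where
  "factors_affinely R \<mu> f \<longleftrightarrow> (\<exists>(I :: nat set) C e. finite I \<and> card I \<le> \<mu> \<and>
     (\<forall>x\<in>R. \<exists>y. \<forall>j. f x j = (\<Sum>p\<in>I. C j p * y p) + e j))"

lemma factors_affinelyE: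
  assumes "factors_affinely R \<mu> f"
  obtains I :: "nat set" and C e where "finite I" and "card I \<le> \<mu>"
    and "\<forall>x\<in>R. \<exists>y. \<forall>j. f x j = (\<Sum>p\<in>I. C j p * y p) + e j"
  using assms by (auto simp: factors_affinely_def)

lemma factors_affinely_cong:
  assumes "\<And>x. x \<in> R \<Longrightarrow> f x = g x" and "factors_affinely R \<mu> f"
  shows "factors_affinely R \<mu> g"
  using assms by (fastforce simp: factors_affinely_def)

lemma factors_affinely_supported:
  assumes "finite S" and "\<forall>x\<in>R. \<forall>j. j \<notin> S \<longrightarrow> f x j = 0"
  shows "factors_affinely R (card S) f"
  unfolding factors_affinely_def
proof (rule exI[of _ S], rule exI[of _ "\<lambda>j p. of_bool (j = p)"], rule exI[of _ "\<lambda>_. 0"],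
    intro conjI ballI)
  fix x assume "x \<in> R"
  have "S \<inter> {p. j = p} = (if j \<in> S then {j} else {})" for j
    by auto
  then have "(\<Sum>p\<in>S. of_bool (j = p) * f x p) = f x j" for j
    using assms \<open>x \<in> R\<close> by simp
  then show "\<exists>y. \<forall>j. f x j = (\<Sum>p\<in>S. of_bool (j = p) * y p) + 0"
    by (intro exI[of _ "f x"]) simp
qed (use assms in auto)

lemma factors_affinely_preact:
  assumes "factors_affinely R \<mu> f"
  shows "factors_affinely R \<mu> (\<lambda>x. preact A c n (f x))"
proof -
  obtain I :: "nat set" and C e where I: "finite I" "card I \<le> \<mu>"
    and rep: "\<forall>x\<in>R. \<exists>y. \<forall>j. f x j = (\<Sum>p\<in>I. C j p * y p) + e j"
    using assms by (rule factors_affinelyE)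
  have compose: "preact A c n (f x) j
      = (\<Sum>p\<in>I. (\<Sum>q<n. A j q * C q p) * y p) + ((\<Sum>q<n. A j q * e q) + c j)"
    if "\<forall>j. f x j = (\<Sum>p\<in>I. C j p * y p) + e j" for x y j
  proof -
    have "preact A c n (f x) j = (\<Sum>q<n. \<Sum>p\<in>I. A j q * C q p * y p) + (\<Sum>q<n. A j q * e q) + c j"
      using that by (simp add: preact_def distrib_left sum.distrib sum_distrib_left mult.assoc)
    also have "(\<Sum>q<n. \<Sum>p\<in>I. A j q * C q p * y p) = (\<Sum>p\<in>I. (\<Sum>q<n. A j q * C q p) * y p)"
      by (subst sum.swap) (simp add: sum_distrib_right)
    finally show ?thesis by simp
  qed
  show ?thesis
    unfolding factors_affinely_def
    by (intro exI[of _ I] exI[of _ "\<lambda>j p. \<Sum>q<n. A j q * C q p"]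
        exI[of _ "\<lambda>j. (\<Sum>q<n. A j q * e q) + c j"]) (use I rep compose in blast)
qed

lemma factors_affinely_restrict:
  assumes "finite S" and "factors_affinely R \<mu> f"
  shows "factors_affinely R (min \<mu> (card S)) (\<lambda>x j. if j \<in> S then f x j else 0)"
proof (cases "\<mu> \<le> card S")
  case True
  obtain I :: "nat set" and C e where I: "finite I" "card I \<le> \<mu>"
    and rep: "\<forall>x\<in>R. \<exists>y. \<forall>j. f x j = (\<Sum>p\<in>I. C j p * y p) + e j"
    using assms(2) by (rule factors_affinelyE)
  have "\<forall>x\<in>R. \<exists>y. \<forall>j. (if j \<in> S then f x j else 0)
      = (\<Sum>p\<in>I. (if j \<in> S then C j p else 0) * y p) + (if j \<in> S then e j else 0)"
  proof
    fix x assume "x \<in> R"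
    then obtain y where "\<forall>j. f x j = (\<Sum>p\<in>I. C j p * y p) + e j"
      using rep by blast
    then show "\<exists>y. \<forall>j. (if j \<in> S then f x j else 0)
        = (\<Sum>p\<in>I. (if j \<in> S then C j p else 0) * y p) + (if j \<in> S then e j else 0)"
      by (intro exI[of _ y]) simp
  qed
  then show ?thesis
    unfolding factors_affinely_def using I True by (intro exI) auto
next
  case False
  then show ?thesis
    using factors_affinely_supported[OF assms(1)] by simp
qed

lemma factors_affinely_obtain_preact:
  assumes "factors_affinely R k f"
  obtains W' b' where "\<forall>x\<in>R. \<exists>y. (\<forall>j\<ge>k. y j = 0) \<and> f x = preact W' b' k y"
proof -
  obtain I :: "nat set" and C e where I: "finite I" "card I \<le> k"
    and rep: "\<forall>x\<in>R. \<exists>y. \<forall>j. f x j = (\<Sum>p\<in>I. C j p * y p) + e j"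
    using assms by (rule factors_affinelyE)
  obtain h where h: "bij_betw h {0..<card I} I"
    using ex_bij_betw_nat_finite[OF I(1)] by blast
  have "\<exists>y'. (\<forall>j\<ge>k. y' j = 0) \<and> f x = preact (\<lambda>j p. C j (h p)) e k y'" if "x \<in> R" for x
  proof -
    obtain y where y: "\<forall>j. f x j = (\<Sum>p\<in>I. C j p * y p) + e j"
      using rep \<open>x \<in> R\<close> by blast
    define y' where "y' p = (if p < card I then y (h p) else 0)" for p
    have "(\<Sum>p<k. C j (h p) * y' p) = (\<Sum>p\<in>I. C j p * y p)" for j
    proof -
      have "(\<Sum>p<k. C j (h p) * y' p) = (\<Sum>p\<in>{0..<card I}. C j (h p) * y' p)"
        by (rule sum.mono_neutral_right) (use I(2) in \<open>auto simp: y'_def\<close>)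
      also have "\<dots> = (\<Sum>p\<in>{0..<card I}. C j (h p) * y (h p))"
        by (rule sum.cong) (auto simp: y'_def)
      also have "\<dots> = (\<Sum>p\<in>I. C j p * y p)"
        by (rule sum.reindex_bij_betw[OF h])
      finally show ?thesis .
    qed
    then show ?thesis
      using I(2) y by (intro exI[of _ y']) (auto simp: y'_def preact_def)
  qed
  then show ?thesis
    by (intro that) blast
qed

lemma msig_Suc:
  "msig d W B (Suc m) x
     = msig d W B m x @ [sigl (W (Suc m)) (B (Suc m)) (d m) (d (Suc m)) (netout d W B m x)]"
  by (simp add: msig_def)

lemma netout_Suc_eq_restrict:
  "netout d W B (Suc i) x = (\<lambda>j.
     if j \<in> sigl (W (Suc i)) (B (Suc i)) (d i) (d (Suc i)) (netout d W B i x)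
     then preact (W (Suc i)) (B (Suc i)) (d i) (netout d W B i x) j else 0)"
  by (auto simp: layer_def sigl_def)

lemma Sl_0: "Sl d W B 0 = {[]}"
  by (auto simp: Sl_def msig_def intro: exI[of _ "\<lambda>_. 0"])

lemma snoc_mem_Sl_Suc_iff:
  "t @ [s] \<in> Sl d W B (Suc m) \<longleftrightarrow> (\<exists>x. (\<forall>j\<ge>d 0. x j = 0) \<and> msig d W B m x = t \<and>
     s = sigl (W (Suc m)) (B (Suc m)) (d m) (d (Suc m)) (netout d W B m x))"
  by (auto simp: Sl_def msig_Suc)

lemma Sl_Suc_butlast:
  assumes "t \<in> Sl d W B (Suc m)"
  shows "butlast t \<in> Sl d W B m" and "t = butlast t @ [last t]"
  using assms by (auto simp: Sl_def msig_Suc)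

lemma finite_mem_Sl:
  assumes "t \<in> Sl d W B m" and "s \<in> set t" shows "finite s"
  using assms by (auto simp: Sl_def msig_def intro: finite_subset[OF sigl_subset])

lemma finite_Sl: "finite (Sl d W B m)"
proof (induction m)
  case 0
  then show ?case by (simp add: Sl_0)
next
  case (Suc m)
  have "Sl d W B (Suc m) \<subseteq> (\<lambda>(t, s). t @ [s]) ` (Sl d W B m \<times> Pow {..<d (Suc m)})"
  proof
    fix t assume t: "t \<in> Sl d W B (Suc m)"
    then have "last t \<subseteq> {..<d (Suc m)}"
      using Sl_Suc_butlast(2) snoc_mem_Sl_Suc_iff sigl_subset by metis
    then show "t \<in> (\<lambda>(t, s). t @ [s]) ` (Sl d W B m \<times> Pow {..<d (Suc m)})"
      using Sl_Suc_butlast[OF t] by force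
  qed
  then show ?case
    using Suc.IH finite_subset by blast
qed

lemma Sl_Suc_filter_subset:
  "{t' \<in> Sl d W B (Suc m). P t'}
     \<subseteq> (\<Union>t\<in>Sl d W B m. (\<lambda>s. t @ [s]) ` {s. t @ [s] \<in> Sl d W B (Suc m) \<and> P (t @ [s])})"
proof
  fix t' assume "t' \<in> {t' \<in> Sl d W B (Suc m). P t'}"
  then have mem: "t' \<in> Sl d W B (Suc m)" and "P t'"
    by simp_all
  have t': "t' = butlast t' @ [last t']"
    by (rule Sl_Suc_butlast(2)[OF mem])
  have "last t' \<in> {s. butlast t' @ [s] \<in> Sl d W B (Suc m) \<and> P (butlast t' @ [s])}"
    using mem \<open>P t'\<close> by (simp add: t'[symmetric])
  then show "t' \<in> (\<Union>t\<in>Sl d W B m. (\<lambda>s. t @ [s]) ` {s. t @ [s] \<in> Sl d W B (Suc m) \<and> P (t @ [s])})"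
    using Sl_Suc_butlast(1)[OF mem] t' by blast
qed

lemma factors_affinely_netout:
  assumes "t \<in> Sl d W B m" and "\<forall>x\<in>R. (\<forall>j\<ge>d 0. x j = 0) \<and> msig d W B m x = t"
  shows "factors_affinely R (bottleneck (d 0) t) (netout d W B m)"
  using assms
proof (induction m arbitrary: t)
  case 0
  then have "t = []" by (simp add: Sl_0)
  have "factors_affinely R (card {..<d 0}) (\<lambda>x. x)"
    using "0.prems"(2) by (intro factors_affinely_supported) auto
  then show ?case by (simp add: \<open>t = []\<close>)
next
  case (Suc m)
  define s where "s = last t"
  have t: "t = butlast t @ [s]" and prefix: "butlast t \<in> Sl d W B m"
    using Sl_Suc_butlast[OF Suc.prems(1)] by (simp_all add: s_def)
  have R: "msig d W B m x = butlast t"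
      "sigl (W (Suc m)) (B (Suc m)) (d m) (d (Suc m)) (netout d W B m x) = s" if "x \<in> R" for x
    using Suc.prems(2) that t msig_Suc[of d W B m x] by (metis append1_eq_conv)+
  have "finite s"
    using finite_mem_Sl[OF Suc.prems(1)] t by (metis in_set_conv_decomp)
  have "factors_affinely R (bottleneck (d 0) (butlast t)) (netout d W B m)"
    using Suc.IH[OF prefix] Suc.prems(2) R(1) by blast
  then have "factors_affinely R (min (bottleneck (d 0) (butlast t)) (card s))
      (\<lambda>x j. if j \<in> s then preact (W (Suc m)) (B (Suc m)) (d m) (netout d W B m x) j else 0)"
    by (intro factors_affinely_restrict factors_affinely_preact \<open>finite s\<close>)
  then have "factors_affinely R (min (bottleneck (d 0) (butlast t)) (card s)) (netout d W B (Suc m))"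
    by (rule factors_affinely_cong[rotated]) (simp add: netout_Suc_eq_restrict R(2) del: netout.simps)
  moreover have "bottleneck (d 0) t = min (bottleneck (d 0) (butlast t)) (card s)"
    by (metis bottleneck_snoc min.commute t)
  ultimately show ?case
    by (simp del: netout.simps)
qed

lemma snoc_signatures_subset_sigset:
  assumes "t \<in> Sl d W B m"
  obtains W' b' where "{s. t @ [s] \<in> Sl d W B (Suc m)}
    \<subseteq> sigset (min (bottleneck (d 0) t) (d (Suc m))) (d (Suc m)) W' b'"
proof -
  define k where "k = min (bottleneck (d 0) t) (d (Suc m))"
  define R where "R = {x. (\<forall>j\<ge>d 0. x j = 0) \<and> msig d W B m x = t}"
  define P where "P x = preact (W (Suc m)) (B (Suc m)) (d m) (netout d W B m x)" for x
  have "factors_affinely R (bottleneck (d 0) t) (netout d W B m)"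
    using assms by (intro factors_affinely_netout) (auto simp: R_def)
  txt \<open>Only the d (Suc m) coordinates of the layer enter its signature, which caps the
    dimension at d (Suc m).\<close>
  then have "factors_affinely R (min (bottleneck (d 0) t) (card {..<d (Suc m)}))
      (\<lambda>x j. if j \<in> {..<d (Suc m)} then P x j else 0)"
    unfolding P_def by (intro factors_affinely_restrict factors_affinely_preact finite_lessThan)
  then have "factors_affinely R k (\<lambda>x j. if j \<in> {..<d (Suc m)} then P x j else 0)"
    by (simp only: card_lessThan k_def)
  then obtain W' b' where rep: "\<forall>x\<in>R. \<exists>y. (\<forall>j\<ge>k. y j = 0)
      \<and> (\<lambda>j. if j \<in> {..<d (Suc m)} then P x j else 0) = preact W' b' k y"
    by (rule factors_affinely_obtain_preact)
  have "s \<in> sigset k (d (Suc m)) W' b'" if snoc: "t @ [s] \<in> Sl d W B (Suc m)" for s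
  proof -
    obtain x where "\<forall>j\<ge>d 0. x j = 0" "msig d W B m x = t"
      and s: "s = sigl (W (Suc m)) (B (Suc m)) (d m) (d (Suc m)) (netout d W B m x)"
      using snoc unfolding snoc_mem_Sl_Suc_iff by blast
    then have "x \<in> R"
      by (simp add: R_def)
    then obtain y where y: "\<forall>j\<ge>k. y j = 0"
      and P: "(\<lambda>j. if j \<in> {..<d (Suc m)} then P x j else 0) = preact W' b' k y"
      using rep by blast
    have "P x i = preact W' b' k y i" if "i < d (Suc m)" for i
      using fun_cong[OF P, of i] that by simp
    then have "s = sigl W' b' k (d (Suc m)) y"
      unfolding s sigl_def P_def by auto
    then show ?thesis
      unfolding sigset_def using y by blast
  qed
  then have "{s. t @ [s] \<in> Sl d W B (Suc m)} \<subseteq> sigset k (d (Suc m)) W' b'"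
    by blast
  then show ?thesis
    unfolding k_def by (rule that)
qed

lemma card_snoc_signatures_le:
  assumes "t \<in> Sl d W B m"
    and "\<forall>k\<le>d (Suc m). precV (maxV (HRL k (d (Suc m)))) (\<gamma> k (d (Suc m)))"
  defines "k \<equiv> min (bottleneck (d 0) t) (d (Suc m))"
  shows "card {s. t @ [s] \<in> Sl d W B (Suc m) \<and> J \<le> bottleneck (d 0) (t @ [s])}
    \<le> (if J \<le> k then tail (\<gamma> k (d (Suc m))) J else 0)"
proof -
  obtain W' b' where sub: "{s. t @ [s] \<in> Sl d W B (Suc m)} \<subseteq> sigset k (d (Suc m)) W' b'"
    using snoc_signatures_subset_sigset[OF assms(1)] unfolding k_def .
  let ?E = "{s. t @ [s] \<in> Sl d W B (Suc m) \<and> J \<le> bottleneck (d 0) (t @ [s])}"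
  have E: "J \<le> card s" "J \<le> k" if "s \<in> ?E" for s
  proof -
    have "s \<in> sigset k (d (Suc m)) W' b'"
      using that sub by blast
    moreover have "J \<le> min (card s) (bottleneck (d 0) t)"
      using that by (simp add: bottleneck_snoc)
    ultimately show "J \<le> card s" "J \<le> k"
      using card_le_of_mem_sigset by (fastforce simp: k_def)+
  qed
  show ?thesis
  proof (cases "J \<le> k")
    case True
    have "?E \<subseteq> {s \<in> sigset k (d (Suc m)) W' b'. J \<le> card s}"
      using sub E(1) by blast
    then have "card ?E \<le> card {s \<in> sigset k (d (Suc m)) W' b'. J \<le> card s}"
      by (rule card_mono[rotated]) (simp add: finite_sigset)
    also have "\<dots> = tail (Hcount (d (Suc m)) (sigset k (d (Suc m)) W' b')) J"
      by (simp add: tail_Hcount_sigset)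
    also have "\<dots> \<le> tail (maxV (HRL k (d (Suc m)))) J"
      using True by (rule tail_Hcount_le_tail_maxV_HRL)
    also have "\<dots> \<le> tail (\<gamma> k (d (Suc m))) J"
      using assms(2) min.cobounded2 unfolding k_def precV_def by blast
    finally show ?thesis
      using True by simp
  next
    case False
    then have "?E = {}"
      using E(2) by blast
    then show ?thesis
      using False by (simp only: card.empty)
  qed
qed

lemma tail_Htil_Sl_Suc_le:
  assumes "\<forall>k\<le>d (Suc m).
    finsupp (\<gamma> k (d (Suc m))) \<and> precV (maxV (HRL k (d (Suc m)))) (\<gamma> k (d (Suc m)))"
  shows "tail (Htil (d 0) (Sl d W B (Suc m))) J
    \<le> tail (phi \<gamma> (d (Suc m)) (Htil (d 0) (Sl d W B m))) J"
proof -
  let ?\<beta> = "bottleneck (d 0)"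
  let ?E = "\<lambda>t. {s. t @ [s] \<in> Sl d W B (Suc m) \<and> J \<le> ?\<beta> (t @ [s])}"
  have "tail (Htil (d 0) (Sl d W B (Suc m))) J = card {t' \<in> Sl d W B (Suc m). J \<le> ?\<beta> t'}"
    by (simp add: Htil_eq_histogram tail_histogram finite_Sl)
  also have "\<dots> \<le> card (\<Union>t\<in>Sl d W B m. (\<lambda>s. t @ [s]) ` ?E t)"
  proof (rule card_mono)
    show "finite (\<Union>t\<in>Sl d W B m. (\<lambda>s. t @ [s]) ` ?E t)"
      by (rule finite_subset[OF _ finite_Sl[of d W B "Suc m"]]) blast
  qed (rule Sl_Suc_filter_subset)
  also have "\<dots> \<le> (\<Sum>t\<in>Sl d W B m. card ((\<lambda>s. t @ [s]) ` ?E t))"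
    by (rule card_UN_le[OF finite_Sl])
  also have "\<dots> = (\<Sum>t\<in>Sl d W B m. card (?E t))"
    by (intro sum.cong refl card_image) (simp add: inj_on_def)
  also have "\<dots> \<le> (\<Sum>t\<in>Sl d W B m. if J \<le> min (?\<beta> t) (d (Suc m))
      then tail (\<gamma> (min (?\<beta> t) (d (Suc m))) (d (Suc m))) J else 0)"
    using assms by (intro sum_mono card_snoc_signatures_le) auto
  also have "\<dots> = tail (phi \<gamma> (d (Suc m)) (Htil (d 0) (Sl d W B m))) J"
    using assms by (simp add: Htil_eq_histogram tail_phi_histogram finite_Sl)
  finally show ?thesis .
qed

theorem mainTheorem4:
  fixes d :: "nat \<Rightarrow> nat" and L :: nat
    and W :: "nat \<Rightarrow> nat \<Rightarrow> nat \<Rightarrow> real" and B :: "nat \<Rightarrow> nat \<Rightarrow> real"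
    and \<gamma> :: "nat \<Rightarrow> nat \<Rightarrow> nat \<Rightarrow> nat" and l :: nat
  assumes "0 < L" and "\<forall>k\<le>L. 0 < d k"
    and "Gamma \<gamma>"
    and "2 \<le> l" and "l \<le> L"
  shows "precV (Htil (d 0) (Sl d W B l)) (phi \<gamma> (d l) (Htil (d 0) (Sl d W B (l - 1))))"
proof -
  obtain m where l: "l = Suc m"
    using assms(4) by (cases l) auto
  have "1 \<le> d l"
    using assms(2,5) by (simp add: Suc_le_eq)
  then have "\<forall>k\<le>d (Suc m).
      finsupp (\<gamma> k (d (Suc m))) \<and> precV (maxV (HRL k (d (Suc m)))) (\<gamma> k (d (Suc m)))"
    using assms(3) by (simp add: Gamma_def l)
  then have "tail (Htil (d 0) (Sl d W B (Suc m))) J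
      \<le> tail (phi \<gamma> (d (Suc m)) (Htil (d 0) (Sl d W B m))) J" for J
    by (rule tail_Htil_Sl_Suc_le)
  then show ?thesis
    unfolding precV_def l by simp
qed

end
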